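(* There is a deterministic sorting algorithm with error $2$ that, given $n$ elements, uses at most $4 n^{3/2}$ comparisons; that is, it outputs a $2$-sorted ordering of the elements.
   Context: Model of imprecise comparisons: there are $n$ elements, each with a fixed unknown real value; we identify an element with its value. Asked to compare $x_i$ and $x_j$, the comparator answers either "$x_i \ge x_j$" or "$x_j \ge x_i$". If $|x_i-x_j|>1$ the answer is correct; if $|x_i-x_j|\le 1$ the answer is arbitrary (possibly adversarial and adaptive). An ordering $x_{\pi(1)},\dots,x_{\pi(n)}$ is $k$-sorted if $x_{\pi(i)} \ge x_{\pi(j)} - k$ for every $i>j$. Comparison bounds are worst case over inputs and comparator behaviours. *)

theory Defs
  imports Complex_Main
begin

text \<open>A node
  Cmp i j l r asks the comparator about elements i and j; the answer
  "x_i >= x_j" continues in l, the answer "x_j >= x_i" continues in r.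
  A leaf carries the output ordering (a list of element indices,
  listed in positions 1..n).\<close>

datatype dtree = Out "nat list" | Cmp nat nat dtree dtree

fun queries_in :: "nat \<Rightarrow> dtree \<Rightarrow> bool" where
  "queries_in n (Out p) = True"
| "queries_in n (Cmp i j l r) = (i < n \<and> j < n \<and> queries_in n l \<and> queries_in n r)"

text \<open>An arbitrary, possibly adaptive, adversarial comparator
  against a deterministic tree amounts to choosing any permitted answer at
  each node.\<close>
definition may_answer_ge :: "(nat \<Rightarrow> real) \<Rightarrow> nat \<Rightarrow> nat \<Rightarrow> bool" where
  "may_answer_ge x i j \<longleftrightarrow> \<not> (\<bar>x i - x j\<bar> > 1 \<and> x i < x j)"

inductive run :: "(nat \<Rightarrow> real) \<Rightarrow> dtree \<Rightarrow> nat \<Rightarrow> nat list \<Rightarrow> bool" where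
  leaf: "run x (Out p) 0 p"
| left: "may_answer_ge x i j \<Longrightarrow> run x l d p \<Longrightarrow> run x (Cmp i j l r) (Suc d) p"
| right: "may_answer_ge x j i \<Longrightarrow> run x r d p \<Longrightarrow> run x (Cmp i j l r) (Suc d) p"

definition is_ordering :: "nat \<Rightarrow> nat list \<Rightarrow> bool" where
  "is_ordering n p \<longleftrightarrow> distinct p \<and> set p = {..<n}"

definition k_sorted :: "real \<Rightarrow> (nat \<Rightarrow> real) \<Rightarrow> nat list \<Rightarrow> bool" where
  "k_sorted k x p \<longleftrightarrow> (\<forall>i < length p. \<forall>j < i. x (p ! i) \<ge> x (p ! j) - k)"

end

theory Submission
  imports Defs "HOL-Library.Multiset" "HOL-Library.Monad_Syntax"
begin

text \<open>The algorithm is quicksort with a pivot chosen by a round-robin tournament. For a list of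
  N elements let q = floor(sqrt N / 3) and compare all pairs of a sample of s = 4q + 1 elements.
  In a tournament the k players with fewer than q wins win at most k(q - 1) of the k(k - 1)/2
  games among themselves, so k <= 2q - 1; likewise for losses, so among 4q - 1 or more players
  some player has at least q wins and at least q losses. Such a pivot m splits the remaining
  elements, after one comparison each with m, into two parts of size at least q whose values are
  at most x m + 1 resp. at least x m - 1, so recursively 2-sorted parts concatenate around m to a
  2-sorted list. The cost satisfies C(N) <= s(s - 1)/2 + (N - s) + C(a) + C(b) with
  a + b = N - 1 and a, b >= q, and convexity of t^(3/2) bounds it by 4 N^(3/2).\<close>

datatype 'a prog = Ret 'a | Ask nat nat "'a prog" "'a prog"

primrec bind_prog :: "'a prog \<Rightarrow> ('a \<Rightarrow> 'b prog) \<Rightarrow> 'b prog" where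
  "bind_prog (Ret a) f = f a"
| "bind_prog (Ask i j l r) f = Ask i j (bind_prog l f) (bind_prog r f)"

adhoc_overloading Monad_Syntax.bind \<rightleftharpoons> bind_prog

inductive exec :: "(nat \<Rightarrow> real) \<Rightarrow> 'a prog \<Rightarrow> nat \<Rightarrow> 'a \<Rightarrow> bool" where
  exec_Ret: "exec x (Ret a) 0 a"
| exec_Ask_left: "may_answer_ge x i j \<Longrightarrow> exec x l d v \<Longrightarrow> exec x (Ask i j l r) (Suc d) v"
| exec_Ask_right: "may_answer_ge x j i \<Longrightarrow> exec x r d v \<Longrightarrow> exec x (Ask i j l r) (Suc d) v"

inductive_cases exec_AskE: "exec x (Ask i j l r) d v"

lemma exec_Ret_iff [simp]: "exec x (Ret a) d v \<longleftrightarrow> d = 0 \<and> v = a"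
  by (auto elim: exec.cases intro: exec_Ret)

lemma exec_bind_iff:
  "exec x (p \<bind> f) d v \<longleftrightarrow> (\<exists>d1 v1 d2. exec x p d1 v1 \<and> exec x (f v1) d2 v \<and> d = d1 + d2)"
proof
  show "exec x (p \<bind> f) d v \<Longrightarrow> \<exists>d1 v1 d2. exec x p d1 v1 \<and> exec x (f v1) d2 v \<and> d = d1 + d2"
  proof (induction p arbitrary: d)
    case (Ret a)
    then show ?case using exec_Ret by fastforce
  next
    case (Ask i j l r)
    then have "exec x (Ask i j (l \<bind> f) (r \<bind> f)) d v" by simp
    then show ?case
    proof (rule exec_AskE)
      fix d' assume "d = Suc d'" "may_answer_ge x i j" "exec x (l \<bind> f) d' v"
      then show ?thesis using Ask.IH(1) exec_Ask_left by (metis add_Suc)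
    next
      fix d' assume "d = Suc d'" "may_answer_ge x j i" "exec x (r \<bind> f) d' v"
      then show ?thesis using Ask.IH(2) exec_Ask_right by (metis add_Suc)
    qed
  qed
next
  assume "\<exists>d1 v1 d2. exec x p d1 v1 \<and> exec x (f v1) d2 v \<and> d = d1 + d2"
  then obtain d1 v1 d2 where "exec x p d1 v1" "exec x (f v1) d2 v" "d = d1 + d2" by blast
  then show "exec x (p \<bind> f) d v"
    by (induction arbitrary: d rule: exec.induct) (auto intro: exec_Ask_left exec_Ask_right)
qed

primrec queries_below :: "nat \<Rightarrow> 'a prog \<Rightarrow> bool" where
  "queries_below n (Ret a) = True"
| "queries_below n (Ask i j l r) = (i < n \<and> j < n \<and> queries_below n l \<and> queries_below n r)"

lemma exec_const_valuation: "exec x p d v \<Longrightarrow> exec (\<lambda>_. c) p d v"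
  by (induction rule: exec.induct) (auto intro: exec.intros simp: may_answer_ge_def)

lemma queries_below_bind:
  assumes "queries_below n p" and "\<And>x d v. exec x p d v \<Longrightarrow> queries_below n (f v)"
  shows "queries_below n (p \<bind> f)"
  using assms
proof (induction p)
  case (Ret a)
  then show ?case using exec_Ret by fastforce
next
  case (Ask i j l r)
  \<comment> \<open>a constant valuation permits every answer, so each branch is reachable\<close>
  have "queries_below n (f v)" if "exec x l d v \<or> exec x r d v" for x d v
  proof -
    have "exec (\<lambda>_. 0) (Ask i j l r) (Suc d) v"
      using that by (auto intro: exec_Ask_left exec_Ask_right exec_const_valuation
          simp: may_answer_ge_def)
    then show ?thesis using Ask.prems(2) by blast
  qed
  then have "queries_below n (l \<bind> f)" "queries_below n (r \<bind> f)"
    using Ask.prems(1) by (auto intro!: Ask.IH)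
  then show ?case using Ask.prems(1) by simp
qed

primrec to_dtree :: "nat list prog \<Rightarrow> dtree" where
  "to_dtree (Ret p) = Out p"
| "to_dtree (Ask i j l r) = Cmp i j (to_dtree l) (to_dtree r)"

lemma exec_if_run_to_dtree: "run x (to_dtree q) d p \<Longrightarrow> exec x q d p"
proof (induction x "to_dtree q" d p arbitrary: q rule: run.induct)
  case (leaf x p)
  then show ?case by (cases q) auto
next
  case (left x i j l d p r)
  then show ?case by (cases q) (auto intro: exec_Ask_left)
next
  case (right x j i r d p l)
  then show ?case by (cases q) (auto intro: exec_Ask_right)
qed

lemma queries_in_to_dtree: "queries_below n q \<Longrightarrow> queries_in n (to_dtree q)"
  by (induction q) auto

lemma may_answer_geD: "may_answer_ge x i j \<Longrightarrow> x j - 1 \<le> x i"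
  unfolding may_answer_ge_def by auto

primrec pivot_partition :: "nat \<Rightarrow> nat list \<Rightarrow> (nat list \<times> nat list) prog" where
  "pivot_partition m [] = Ret ([], [])"
| "pivot_partition m (e # es) =
     Ask m e (do { (L, U) \<leftarrow> pivot_partition m es; Ret (e # L, U) })
             (do { (L, U) \<leftarrow> pivot_partition m es; Ret (L, e # U) })"

lemma exec_pivot_partition:
  assumes "exec x (pivot_partition m es) d (L, U)"
  shows "d = length es" and "mset L + mset U = mset es"
    and "\<forall>l \<in> set L. x l - 1 \<le> x m" and "\<forall>u \<in> set U. x m - 1 \<le> x u"
proof -
  have "d = length es \<and> mset L + mset U = mset es \<and>
     (\<forall>l \<in> set L. x l - 1 \<le> x m) \<and> (\<forall>u \<in> set U. x m - 1 \<le> x u)"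
    using assms
  proof (induction es arbitrary: d L U)
    case (Cons e es)
    then show ?case
      by (auto elim!: exec_AskE simp: exec_bind_iff dest!: Cons.IH may_answer_geD
          split: prod.splits)
  qed simp
  then show "d = length es" "mset L + mset U = mset es"
    "\<forall>l \<in> set L. x l - 1 \<le> x m" "\<forall>u \<in> set U. x m - 1 \<le> x u"
    by simp_all
qed

lemma queries_below_pivot_partition:
  "m < n \<Longrightarrow> set es \<subseteq> {..<n} \<Longrightarrow> queries_below n (pivot_partition m es)"
  by (induction es) (auto intro!: queries_below_bind split: prod.splits)

definition tournament_on :: "'a set \<Rightarrow> ('a \<Rightarrow> 'a \<Rightarrow> bool) \<Rightarrow> bool" where
  "tournament_on X w \<longleftrightarrow> (\<forall>a\<in>X. \<forall>b\<in>X. a \<noteq> b \<longrightarrow> (w a b \<longleftrightarrow> \<not> w b a))"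

text \<open>\<open>w a b\<close> records that the comparator answered \<open>x a \<ge> x b\<close>.\<close>

primrec tournament :: "nat list \<Rightarrow> (nat \<Rightarrow> nat \<Rightarrow> bool) prog" where
  "tournament [] = Ret (\<lambda>_ _. False)"
| "tournament (t # ts) = do {
     (L, _) \<leftarrow> pivot_partition t ts;
     w \<leftarrow> tournament ts;
     Ret (\<lambda>a b. if a = t then b \<in> set L else if b = t then a \<notin> set L else w a b) }"

lemma exec_tournament:
  "exec x (tournament T) d w \<Longrightarrow> 2 * d = length T * (length T - 1) \<and>
     tournament_on (set T) w \<and> (\<forall>a\<in>set T. \<forall>b\<in>set T. a \<noteq> b \<longrightarrow> w a b \<longrightarrow> x b - 1 \<le> x a)"
proof (induction T arbitrary: d w)
  case Nil
  then show ?case by (simp add: tournament_on_def)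
next
  case (Cons t ts)
  from Cons.prems(1) obtain d1 L U d2 w' where
    part: "exec x (pivot_partition t ts) d1 (L, U)" and rec: "exec x (tournament ts) d2 w'" and
    w: "w = (\<lambda>a b. if a = t then b \<in> set L else if b = t then a \<notin> set L else w' a b)" and
    d: "d = d1 + d2"
    by (clarsimp simp: exec_bind_iff)
  note P = exec_pivot_partition[OF part]
  have LU: "set L \<union> set U = set ts"
    using P(2) by (metis set_mset_mset set_mset_union)
  note IH = Cons.IH[OF rec]
  have "2 * d = length (t # ts) * (length (t # ts) - 1)"
    using P IH d by (cases "length ts") auto
  moreover have "tournament_on (set (t # ts)) w"
    unfolding tournament_on_def
  proof (intro ballI impI)
    fix a b assume "a \<in> set (t # ts)" "b \<in> set (t # ts)" "a \<noteq> b"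
    show "w a b \<longleftrightarrow> \<not> w b a"
    proof (cases "a = t \<or> b = t")
      case True
      with \<open>a \<noteq> b\<close> show ?thesis unfolding w by auto
    next
      case False
      with \<open>a \<in> set (t # ts)\<close> \<open>b \<in> set (t # ts)\<close> \<open>a \<noteq> b\<close> IH
      have "w' a b \<longleftrightarrow> \<not> w' b a" unfolding tournament_on_def by (metis set_ConsD)
      with False show ?thesis unfolding w by simp
    qed
  qed
  moreover have "x b - 1 \<le> x a"
    if "a \<in> set (t # ts)" "b \<in> set (t # ts)" "a \<noteq> b" "w a b" for a b
  proof (cases "a = t \<or> b = t")
    case True
    with that P LU show ?thesis unfolding w by (auto split: if_splits)
  next
    case False
    with that IH show ?thesis unfolding w by auto
  qed
  ultimately show ?case by blast
qed

lemma queries_below_tournament: "set T \<subseteq> {..<n} \<Longrightarrow> queries_below n (tournament T)"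
proof (induction T)
  case (Cons t ts)
  then show ?case
    unfolding tournament.simps split_def
    by (intro queries_below_bind queries_below_pivot_partition) auto
qed simp

definition wins :: "('a \<Rightarrow> 'a \<Rightarrow> bool) \<Rightarrow> 'a set \<Rightarrow> 'a \<Rightarrow> 'a set" where
  "wins w X a = {b \<in> X. b \<noteq> a \<and> w a b}"

lemma tournament_on_subset: "tournament_on X w \<Longrightarrow> Y \<subseteq> X \<Longrightarrow> tournament_on Y w"
  unfolding tournament_on_def by blast

lemma tournament_on_reverse: "tournament_on X w \<Longrightarrow> tournament_on X (\<lambda>a b. \<not> w a b)"
  unfolding tournament_on_def by blast

lemma sum_card_wins:
  assumes "finite X" and "tournament_on X w"
  shows "2 * (\<Sum>a\<in>X. card (wins w X a)) = card X * (card X - 1)"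
proof -
  define P where "P = Sigma X (wins w X)"
  have fin: "finite P"
    unfolding P_def wins_def using assms(1) by (auto intro: finite_SigmaI)
  have off_diagonal: "Sigma X (\<lambda>a. X - {a}) = P \<union> prod.swap ` P"
    using assms(2) unfolding P_def wins_def tournament_on_def by (auto simp: image_iff)
  have disjoint: "P \<inter> prod.swap ` P = {}"
    using assms(2) unfolding P_def wins_def tournament_on_def by auto
  have "card X * (card X - 1) = (\<Sum>a\<in>X. card (X - {a}))"
    using assms(1) by simp
  also have "\<dots> = card (P \<union> prod.swap ` P)"
    using assms(1) by (simp add: card_SigmaI flip: off_diagonal)
  also have "\<dots> = 2 * card P"
    using fin disjoint by (simp add: card_Un_disjoint card_image)
  also have "card P = (\<Sum>a\<in>X. card (wins w X a))"
    unfolding P_def using assms(1) by (simp add: card_SigmaI wins_def)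
  finally show ?thesis by simp
qed

lemma card_few_wins_le:
  assumes "finite X" and "tournament_on X w" and "1 \<le> q"
  shows "card {a \<in> X. card (wins w X a) < q} \<le> 2 * q - 1"
proof -
  define Lo where "Lo = {a \<in> X. card (wins w X a) < q}"
  have fin: "finite Lo" and "Lo \<subseteq> X"
    unfolding Lo_def using assms(1) by auto
  have "card (wins w Lo a) \<le> q - 1" if "a \<in> Lo" for a
  proof -
    have "card (wins w Lo a) \<le> card (wins w X a)"
      using \<open>Lo \<subseteq> X\<close> assms(1) by (intro card_mono) (auto simp: wins_def)
    moreover have "card (wins w X a) < q"
      using that unfolding Lo_def by simp
    ultimately show ?thesis by linarith
  qed
  then have "(\<Sum>a\<in>Lo. card (wins w Lo a)) \<le> card Lo * (q - 1)"
    using sum_mono[of Lo "\<lambda>a. card (wins w Lo a)" "\<lambda>_. q - 1"] by simp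
  then have "card Lo * (card Lo - 1) \<le> 2 * (card Lo * (q - 1))"
    using sum_card_wins[OF fin tournament_on_subset[OF assms(2) \<open>Lo \<subseteq> X\<close>]] by linarith
  then have "card Lo * (card Lo - 1) \<le> card Lo * (2 * (q - 1))"
    by (simp only: mult.left_commute)
  then have "card Lo = 0 \<or> card Lo - 1 \<le> 2 * (q - 1)"
    by auto
  then show ?thesis
    using assms(3) unfolding Lo_def[symmetric] by linarith
qed

definition losses :: "('a \<Rightarrow> 'a \<Rightarrow> bool) \<Rightarrow> 'a set \<Rightarrow> 'a \<Rightarrow> 'a set" where
  "losses w X a = {b \<in> X. b \<noteq> a \<and> \<not> w a b}"

lemma losses_eq_wins_reverse: "losses w X = wins (\<lambda>a b. \<not> w a b) X"
  unfolding losses_def wins_def by blast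

lemma card_wins_add_card_losses:
  assumes "finite X" and "a \<in> X"
  shows "card (wins w X a) + card (losses w X a) = card X - 1"
proof -
  have "card (wins w X a) + card (losses w X a) = card (wins w X a \<union> losses w X a)"
    using assms(1) by (intro card_Un_disjoint[symmetric]) (auto simp: wins_def losses_def)
  also have "wins w X a \<union> losses w X a = X - {a}"
    unfolding wins_def losses_def by blast
  finally show ?thesis
    using assms by simp
qed

lemma balanced_vertex_exists:
  assumes "finite X" and "X \<noteq> {}" and "tournament_on X w" and "4 * q \<le> card X + 1"
  shows "\<exists>m\<in>X. q \<le> card (wins w X m) \<and> q \<le> card (losses w X m)"
proof (cases "q = 0")
  case True
  with assms(2) show ?thesis by auto
next
  case False
  define Lo where "Lo = {a \<in> X. card (wins w X a) < q}"
  define Hi where "Hi = {a \<in> X. card (losses w X a) < q}"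
  have "card Lo \<le> 2 * q - 1" "card Hi \<le> 2 * q - 1"
    unfolding Lo_def Hi_def losses_eq_wins_reverse using False
    by (intro card_few_wins_le tournament_on_reverse assms(1,3); simp)+
  then have "card (Lo \<union> Hi) < card X"
    using card_Un_le[of Lo Hi] False assms(4) by linarith
  have "\<not> X \<subseteq> Lo \<union> Hi"
  proof
    assume "X \<subseteq> Lo \<union> Hi"
    then have "card X \<le> card (Lo \<union> Hi)"
      using assms(1) by (intro card_mono) (auto simp: Lo_def Hi_def)
    with \<open>card (Lo \<union> Hi) < card X\<close> show False by simp
  qed
  then show ?thesis
    unfolding Lo_def Hi_def by (auto simp: not_less)
qed

definition balanced_pivot :: "('a \<Rightarrow> 'a \<Rightarrow> bool) \<Rightarrow> 'a set \<Rightarrow> 'a" where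
  "balanced_pivot w X = arg_min_on (\<lambda>m. max (card (wins w X m)) (card (losses w X m))) X"

lemma balanced_pivot_mem: "finite X \<Longrightarrow> X \<noteq> {} \<Longrightarrow> balanced_pivot w X \<in> X"
  unfolding balanced_pivot_def by (rule arg_min_if_finite(1))

lemma balanced_pivot_balanced:
  assumes "finite X" and "X \<noteq> {}" and "tournament_on X w" and "4 * q \<le> card X + 1"
  defines "m \<equiv> balanced_pivot w X"
  shows "q \<le> card (wins w X m)" and "q \<le> card (losses w X m)"
proof -
  obtain m0 where "m0 \<in> X" "q \<le> card (wins w X m0)" "q \<le> card (losses w X m0)"
    using balanced_vertex_exists[OF assms(1-4)] by blast
  moreover have "max (card (wins w X m)) (card (losses w X m))
      \<le> max (card (wins w X m0)) (card (losses w X m0))"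
    unfolding m_def balanced_pivot_def using assms(1,2) \<open>m0 \<in> X\<close> by (rule arg_min_least)
  moreover have "m \<in> X"
    unfolding m_def using assms(1,2) by (rule balanced_pivot_mem)
  ultimately show "q \<le> card (wins w X m)" "q \<le> card (losses w X m)"
    using card_wins_add_card_losses[OF assms(1), of m w]
      card_wins_add_card_losses[OF assms(1), of m0 w]
    by (auto simp: max_def split: if_splits)
qed

lemma three_halves_tangent_le:
  fixes M N :: real
  assumes "0 \<le> M" and "0 \<le> N"
  shows "M * sqrt M + 3/2 * sqrt M * (N - M) \<le> N * sqrt N"
proof -
  define m n where "m = sqrt M" and "n = sqrt N"
  have "0 \<le> (n - m)\<^sup>2 * (n + m / 2)"
    using assms unfolding m_def n_def by simp
  also have "\<dots> = n\<^sup>2 * n - (m\<^sup>2 * m + 3/2 * m * (n\<^sup>2 - m\<^sup>2))"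
    by (simp add: power2_eq_square field_simps)
  finally show ?thesis
    using assms unfolding m_def n_def by simp
qed

lemma three_halves_spread_le:
  fixes q a b :: real
  assumes "0 \<le> q" and "q \<le> a" and "q \<le> b"
  shows "a * sqrt a + b * sqrt b \<le> q * sqrt q + (a + b - q) * sqrt (a + b - q)"
proof -
  have *: "a * sqrt a + b * sqrt b \<le> q * sqrt q + (a + b - q) * sqrt (a + b - q)"
    if "0 \<le> q" "q \<le> a" "a \<le> b" for a b
  proof -
    \<comment> \<open>moving \<open>a - q\<close> from \<open>a\<close> to \<open>b\<close>: the tangent slope \<open>3/2 sqrt a\<close> is at most \<open>3/2 sqrt b\<close>\<close>
    have "a * sqrt a + 3/2 * sqrt a * (q - a) \<le> q * sqrt q"
      using three_halves_tangent_le[of a q] that by simp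
    moreover have "b * sqrt b + 3/2 * sqrt b * ((a + b - q) - b) \<le> (a + b - q) * sqrt (a + b - q)"
      using three_halves_tangent_le[of b "a + b - q"] that by simp
    moreover have "sqrt a * (a - q) \<le> sqrt b * (a - q)"
      using that by (intro mult_right_mono) auto
    ultimately show ?thesis by (simp add: field_simps)
  qed
  show ?thesis
    using *[of a b] *[of b a] assms by (cases "a \<le> b") (simp_all add: add.commute)
qed

lemma sample_overhead_le:
  fixes q r :: real
  assumes q: "q = 0 \<or> 1 \<le> q" and r: "1 \<le> r" "3 * q \<le> r" "r < 3 * q + 3"
  shows "8 * q\<^sup>2 - 2 * q + r\<^sup>2 - 1 + 4 * q * sqrt q \<le> 6 * (q + 1) * sqrt (r\<^sup>2 - 1 - q)"
  using q
proof
  assume "q = 0"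
  define M where "M = r\<^sup>2 - 1"
  have "0 \<le> M" "M \<le> 3\<^sup>2"
    using r \<open>q = 0\<close> mult_mono[of 1 r 1 r] mult_mono[of r 3 r 3]
    unfolding M_def by (simp_all add: power2_eq_square)
  then have "M = sqrt M * sqrt M" "sqrt M \<le> 6"
    using real_sqrt_le_mono[of M "3\<^sup>2"] by simp_all
  then have "M \<le> 6 * sqrt M"
    using mult_right_mono[of "sqrt M" 6 "sqrt M"] by simp
  with \<open>q = 0\<close> show ?thesis
    unfolding M_def by simp
next
  assume "1 \<le> q"
  define t where "t = r - 3 * q"
  have t: "0 \<le> t" "t < 3"
    using r unfolding t_def by simp_all
  have "r - 1/2 \<le> sqrt (r\<^sup>2 - 1 - q)"
    using r \<open>1 \<le> q\<close> by (intro real_le_rsqrt) (simp add: power2_eq_square algebra_simps)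
  then have "6 * (q + 1) * (r - 1/2) \<le> 6 * (q + 1) * sqrt (r\<^sup>2 - 1 - q)"
    using \<open>1 \<le> q\<close> by (intro mult_left_mono) simp_all
  moreover have "4 * q * sqrt q \<le> q\<^sup>2 + 4 * q"
  proof -
    have "0 \<le> q * (sqrt q - 2)\<^sup>2"
      using \<open>1 \<le> q\<close> by simp
    also have "\<dots> = q\<^sup>2 - 4 * q * sqrt q + 4 * q"
      using \<open>1 \<le> q\<close> by (simp add: power2_eq_square algebra_simps)
    finally show ?thesis by simp
  qed
  moreover have "6 * (q + 1) * (r - 1/2) - (8 * q\<^sup>2 - 2 * q + r\<^sup>2 - 1 + q\<^sup>2 + 4 * q)
      = 13 * q + t * (6 - t) - 2"
    unfolding t_def by (simp add: power2_eq_square algebra_simps)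
  moreover have "0 \<le> t * (6 - t)"
    using t by simp
  ultimately show ?thesis
    using \<open>1 \<le> q\<close> by linarith
qed

definition margin :: "nat \<Rightarrow> nat" where
  "margin N = nat \<lfloor>sqrt (real N) / 3\<rfloor>"

definition sample_size :: "nat \<Rightarrow> nat" where
  "sample_size N = 4 * margin N + 1"

definition budget :: "nat \<Rightarrow> real" where
  "budget N = 4 * real N * sqrt (real N)"

lemma margin_bounds:
  "3 * real (margin N) \<le> sqrt (real N)" "sqrt (real N) < 3 * real (margin N) + 3"
proof -
  have "real (margin N) = of_int \<lfloor>sqrt (real N) / 3\<rfloor>"
    by (simp add: margin_def)
  moreover have "of_int \<lfloor>sqrt (real N) / 3\<rfloor> \<le> sqrt (real N) / 3"
    by (rule of_int_floor_le)
  moreover have "sqrt (real N) / 3 < of_int \<lfloor>sqrt (real N) / 3\<rfloor> + 1"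
    by (rule real_of_int_floor_add_one_gt)
  ultimately show "3 * real (margin N) \<le> sqrt (real N)" "sqrt (real N) < 3 * real (margin N) + 3"
    by linarith+
qed

lemma sample_size_le: "1 \<le> N \<Longrightarrow> sample_size N \<le> N"
proof (cases "margin N = 0")
  case False
  define q where "q = real (margin N)"
  have "1 \<le> q" "3 * q \<le> sqrt (real N)"
    using False margin_bounds(1)[of N] unfolding q_def by simp_all
  then have "(3 * q)\<^sup>2 \<le> (sqrt (real N))\<^sup>2"
    by (intro power_mono) simp_all
  then have "9 * (q * q) \<le> real N"
    by (simp add: power2_eq_square)
  moreover have "q \<le> q * q"
    using \<open>1 \<le> q\<close> mult_left_mono[of 1 q q] by simp
  ultimately have "4 * q + 1 \<le> real N"
    using \<open>1 \<le> q\<close> by linarith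
  then show ?thesis
    unfolding sample_size_def q_def by linarith
qed (simp add: sample_size_def)

lemma budget_recurrence:
  assumes "1 \<le> N" and "a + b + 1 = N" and "margin N \<le> a" and "margin N \<le> b"
  shows "real (sample_size N * (sample_size N - 1) div 2 + (N - sample_size N))
      + budget a + budget b \<le> budget N"
proof -
  define q r M where "q = real (margin N)" and "r = sqrt (real N)" and "M = real N - 1 - q"
  have r2: "r\<^sup>2 = real N"
    unfolding r_def by simp
  have "sample_size N * (sample_size N - 1) div 2 = (4 * margin N + 1) * (2 * margin N)"
    unfolding sample_size_def by simp
  then have overhead: "real (sample_size N * (sample_size N - 1) div 2 + (N - sample_size N))
      = 8 * q\<^sup>2 - 2 * q + r\<^sup>2 - 1"
    using sample_size_le[OF assms(1)] r2 unfolding q_def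
    by (simp add: of_nat_diff sample_size_def power2_eq_square algebra_simps)
  have "real a + real b - q = M"
    using assms(2) unfolding M_def by (simp flip: of_nat_add)
  then have spread: "real a * sqrt a + real b * sqrt b \<le> q * sqrt q + M * sqrt M"
    using three_halves_spread_le[of q a b] assms(3,4) unfolding q_def by simp
  have "0 \<le> M"
    using assms(2-4) unfolding M_def q_def by simp
  moreover have "real N - M = q + 1"
    unfolding M_def by simp
  ultimately have tangent: "M * sqrt M + 3/2 * sqrt M * (q + 1) \<le> real N * sqrt N"
    using three_halves_tangent_le[of M "real N"] by simp
  have "r\<^sup>2 - 1 - q = M"
    using r2 unfolding M_def by simp
  moreover have "1 \<le> r"
    using assms(1) unfolding r_def by simp
  ultimately have key: "8 * q\<^sup>2 - 2 * q + r\<^sup>2 - 1 + 4 * q * sqrt q \<le> 6 * (q + 1) * sqrt M"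
    using sample_overhead_le[of q r] margin_bounds[of N] unfolding q_def r_def by force
  show ?thesis
    using overhead spread tangent key unfolding budget_def by (simp add: field_simps)
qed

definition sample :: "nat list \<Rightarrow> nat list" where
  "sample S = take (sample_size (length S)) S"

definition pivot :: "(nat \<Rightarrow> nat \<Rightarrow> bool) \<Rightarrow> nat list \<Rightarrow> nat" where
  "pivot w S = balanced_pivot w (set (sample S))"

text \<open>The first argument is fuel making the recursion primitive; any value \<open>\<ge> length S\<close> suffices.\<close>

primrec pivot_sort :: "nat \<Rightarrow> nat list \<Rightarrow> nat list prog" where
  "pivot_sort 0 S = Ret S"
| "pivot_sort (Suc f) S = (if S = [] then Ret [] else do {
     w \<leftarrow> tournament (sample S);
     let m = pivot w S;
     (L, U) \<leftarrow> pivot_partition m (drop (sample_size (length S)) S);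
     pl \<leftarrow> pivot_sort f (filter (w m) (remove1 m (sample S)) @ L);
     pu \<leftarrow> pivot_sort f (filter (\<lambda>b. \<not> w m b) (remove1 m (sample S)) @ U);
     Ret (pl @ m # pu) })"

lemma pivot_mem: "S \<noteq> [] \<Longrightarrow> pivot w S \<in> set (sample S)"
  unfolding pivot_def sample_def sample_size_def by (intro balanced_pivot_mem) auto

lemma exec_pivot_sort_SucE:
  assumes "exec x (pivot_sort (Suc f) S) d p" and "S \<noteq> []"
  obtains w L U pl pu d1 d2 d3 d4 where
    "exec x (tournament (sample S)) d1 w"
    "exec x (pivot_partition (pivot w S) (drop (sample_size (length S)) S)) d2 (L, U)"
    "exec x (pivot_sort f
      (filter (w (pivot w S)) (remove1 (pivot w S) (sample S)) @ L)) d3 pl"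
    "exec x (pivot_sort f
      (filter (\<lambda>b. \<not> w (pivot w S) b) (remove1 (pivot w S) (sample S)) @ U)) d4 pu"
    "p = pl @ pivot w S # pu" and "d = d1 + d2 + d3 + d4"
  using assms by (clarsimp simp: exec_bind_iff Let_def)

lemma queries_below_pivot_sort: "set S \<subseteq> {..<n} \<Longrightarrow> queries_below n (pivot_sort f S)"
proof (induction f arbitrary: S)
  case (Suc f)
  have sample: "set (sample S) \<subseteq> set S"
    unfolding sample_def by (rule set_take_subset)
  have rest: "set (fst LU) \<subseteq> set S \<and> set (snd LU) \<subseteq> set S"
    if "exec x (pivot_partition m (drop k S)) d LU" for x m k d LU
    using exec_pivot_partition[of x m "drop k S" d "fst LU" "snd LU"] that set_drop_subset[of k S]
    by (metis Un_subset_iff prod.collapse set_mset_mset set_mset_union)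
  have "queries_below n (pivot_sort f (filter P (remove1 m (sample S)) @ Z))"
    if "set Z \<subseteq> set S" for P m Z
    using that sample set_remove1_subset Suc.prems by (intro Suc.IH) fastforce
  moreover have "pivot w S < n" if "S \<noteq> []" for w
    using pivot_mem[OF that] sample Suc.prems by blast
  ultimately show ?case
    using Suc.prems sample
    unfolding pivot_sort.simps Let_def split_def
    by (auto intro!: queries_below_bind queries_below_tournament queries_below_pivot_partition
        dest!: rest in_set_dropD)
qed simp

lemma mset_pivot_pieces:
  assumes "m \<in> set T" and "mset L + mset U = mset R"
  shows "add_mset m
      (mset (filter P (remove1 m T) @ L) + mset (filter (\<lambda>b. \<not> P b) (remove1 m T) @ U))
    = mset (T @ R)"
proof -
  define T' where "T' = remove1 m T"
  have "mset (filter P T') + mset (filter (\<lambda>b. \<not> P b) T') = mset T'"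
    by (induction T') auto
  moreover have T: "mset T = add_mset m (mset T')"
    unfolding T'_def using assms(1) by (simp add: mset_remove1 insert_DiffM)
  ultimately show ?thesis
    unfolding T'_def[symmetric] by (simp add: T ac_simps flip: assms(2))
qed

lemma card_le_length_filter_remove1:
  "card {b \<in> set T. b \<noteq> m \<and> P b} \<le> length (filter P (remove1 m T))"
proof -
  have "card {b \<in> set T. b \<noteq> m \<and> P b} \<le> card (set (filter P (remove1 m T)))"
    by (intro card_mono) auto
  also have "\<dots> \<le> length (filter P (remove1 m T))"
    by (rule card_length)
  finally show ?thesis .
qed

lemma k_sorted_iff_sorted_wrt: "k_sorted k x p \<longleftrightarrow> sorted_wrt (\<lambda>a b. x a - k \<le> x b) p"
  unfolding k_sorted_def sorted_wrt_iff_nth_less by auto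

lemma k_sorted_append_pivot:
  assumes "k_sorted k x pl" and "k_sorted k x pu"
    and "\<forall>a\<in>set pl. x a - h \<le> x m" and "\<forall>b\<in>set pu. x m - h \<le> x b" and "0 \<le> h" and "2 * h \<le> k"
  shows "k_sorted k x (pl @ m # pu)"
  using assms unfolding k_sorted_iff_sorted_wrt by (fastforce simp: sorted_wrt_append)

lemma pivot_split_bounds:
  assumes "tournament_on (set T) w" and "\<forall>a\<in>set T. \<forall>b\<in>set T. a \<noteq> b \<longrightarrow> w a b \<longrightarrow> x b - 1 \<le> x a"
    and "distinct T" and "m \<in> set T"
    and "\<forall>l\<in>set L. x l - 1 \<le> x m" and "\<forall>u\<in>set U. x m - 1 \<le> x u"
  shows "\<forall>a\<in>set (filter (w m) (remove1 m T) @ L). x a - 1 \<le> x m"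
    and "\<forall>b\<in>set (filter (\<lambda>b. \<not> w m b) (remove1 m T) @ U). x m - 1 \<le> x b"
proof -
  show "\<forall>a\<in>set (filter (w m) (remove1 m T) @ L). x a - 1 \<le> x m"
    using assms by auto
  show "\<forall>b\<in>set (filter (\<lambda>b. \<not> w m b) (remove1 m T) @ U). x m - 1 \<le> x b"
  proof
    fix b assume "b \<in> set (filter (\<lambda>b. \<not> w m b) (remove1 m T) @ U)"
    then consider "b \<in> set T" "b \<noteq> m" "\<not> w m b" | "b \<in> set U"
      using assms(3) by auto
    then show "x m - 1 \<le> x b"
    proof cases
      case 1
      with assms(1,4) have "w b m"
        unfolding tournament_on_def by blast
      with 1 assms(2,4) show ?thesis by blast
    next
      case 2
      with assms(6) show ?thesis by blast
    qed
  qed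
qed

lemma distinct_pieces_if_add_mset_eq:
  assumes "add_mset m (mset A + mset B) = mset S" and "distinct S"
  shows "distinct A" and "distinct B" and "length A + length B + 1 = length S"
proof -
  have "mset (A @ m # B) = mset S"
    using assms(1) by simp
  then show "distinct A" "distinct B" "length A + length B + 1 = length S"
    using assms(2) mset_eq_imp_distinct_iff[of "A @ m # B" S] mset_eq_length[of "A @ m # B" S]
    by auto
qed

lemma pivot_round:
  assumes "distinct S" and "S \<noteq> []"
    and tour: "exec x (tournament (sample S)) d1 w"
    and part: "exec x (pivot_partition (pivot w S) (drop (sample_size (length S)) S)) d2 (L, U)"
  defines "m \<equiv> pivot w S"
    and "CL \<equiv> filter (w (pivot w S)) (remove1 (pivot w S) (sample S)) @ L"
    and "CU \<equiv> filter (\<lambda>b. \<not> w (pivot w S) b) (remove1 (pivot w S) (sample S)) @ U"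
  shows "add_mset m (mset CL + mset CU) = mset S"
    and "margin (length S) \<le> length CL" and "margin (length S) \<le> length CU"
    and "\<forall>a\<in>set CL. x a - 1 \<le> x m" and "\<forall>b\<in>set CU. x m - 1 \<le> x b"
    and "d1 + d2 = sample_size (length S) * (sample_size (length S) - 1) div 2
        + (length S - sample_size (length S))"
proof -
  define N T where "N = length S" and "T = sample S"
  have "sample_size N \<le> N"
    using assms(2) unfolding N_def by (intro sample_size_le) (simp add: Suc_le_eq)
  then have "length T = sample_size N"
    unfolding T_def sample_def N_def by simp
  have "distinct T"
    unfolding T_def sample_def using assms(1) by simp
  have "m \<in> set T"
    unfolding m_def T_def using assms(2) by (rule pivot_mem)
  note W = exec_tournament[OF tour[folded T_def]]
    and P = exec_pivot_partition[OF part[folded m_def]]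
  show "add_mset m (mset CL + mset CU) = mset S"
    using mset_pivot_pieces[OF \<open>m \<in> set T\<close> P(2)]
    unfolding CL_def CU_def T_def sample_def m_def by simp
  have "card (set T) = sample_size N"
    using distinct_card[OF \<open>distinct T\<close>] \<open>length T = sample_size N\<close> by simp
  then have X: "finite (set T)" "set T \<noteq> {}" "tournament_on (set T) w"
    "4 * margin N \<le> card (set T) + 1"
    using W \<open>m \<in> set T\<close> unfolding sample_size_def by auto
  have "m = balanced_pivot w (set T)"
    unfolding m_def pivot_def T_def ..
  then have "margin N \<le> card (wins w (set T) m)" "margin N \<le> card (losses w (set T) m)"
    using balanced_pivot_balanced[OF X] by simp_all
  then show "margin (length S) \<le> length CL" "margin (length S) \<le> length CU"
    using card_le_length_filter_remove1[of T m "w m"]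
      card_le_length_filter_remove1[of T m "\<lambda>b. \<not> w m b"]
    unfolding CL_def CU_def wins_def losses_def N_def T_def m_def by simp_all
  show "\<forall>a\<in>set CL. x a - 1 \<le> x m" "\<forall>b\<in>set CU. x m - 1 \<le> x b"
    using pivot_split_bounds[of T w x m L U] W P \<open>distinct T\<close> \<open>m \<in> set T\<close>
    unfolding CL_def CU_def T_def m_def by simp_all
  show "d1 + d2 = sample_size (length S) * (sample_size (length S) - 1) div 2
      + (length S - sample_size (length S))"
  proof -
    have "2 * d1 = sample_size N * (sample_size N - 1)"
      using W \<open>length T = sample_size N\<close> by simp
    then show ?thesis
      using P(1) unfolding N_def by simp
  qed
qed

lemma exec_pivot_sort:
  assumes "exec x (pivot_sort f S) d p" and "distinct S" and "length S \<le> f"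
  shows "mset p = mset S \<and> k_sorted 2 x p \<and> real d \<le> budget (length S)"
  using assms
proof (induction f arbitrary: S d p)
  case 0
  then show ?case by (simp add: k_sorted_def budget_def)
next
  case (Suc f)
  show ?case
  proof (cases "S = []")
    case True
    with Suc.prems show ?thesis by (simp add: k_sorted_def budget_def)
  next
    case False
    obtain w L U pl pu d1 d2 d3 d4 where
      tour: "exec x (tournament (sample S)) d1 w" and
      part: "exec x (pivot_partition (pivot w S) (drop (sample_size (length S)) S)) d2 (L, U)" and
      low: "exec x (pivot_sort f
        (filter (w (pivot w S)) (remove1 (pivot w S) (sample S)) @ L)) d3 pl" and
      high: "exec x (pivot_sort f
        (filter (\<lambda>b. \<not> w (pivot w S) b) (remove1 (pivot w S) (sample S)) @ U)) d4 pu" and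
      p: "p = pl @ pivot w S # pu" and d: "d = d1 + d2 + d3 + d4"
      using Suc.prems(1) False by (rule exec_pivot_sort_SucE)
    define m CL CU where "m = pivot w S"
      and "CL = filter (w (pivot w S)) (remove1 (pivot w S) (sample S)) @ L"
      and "CU = filter (\<lambda>b. \<not> w (pivot w S) b) (remove1 (pivot w S) (sample S)) @ U"
    note round = pivot_round[OF Suc.prems(2) False tour part, folded m_def CL_def CU_def]
    note pieces = distinct_pieces_if_add_mset_eq[OF round(1) Suc.prems(2)]
    then have IH: "mset pl = mset CL \<and> k_sorted 2 x pl \<and> real d3 \<le> budget (length CL)"
      "mset pu = mset CU \<and> k_sorted 2 x pu \<and> real d4 \<le> budget (length CU)"
      using Suc.prems(3) Suc.IH[OF low[folded CL_def]] Suc.IH[OF high[folded CU_def]] by simp_all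
    have "mset p = mset S"
      using round(1) IH unfolding p m_def[symmetric] by simp
    moreover have "k_sorted 2 x p"
    proof -
      have "set pl = set CL" "set pu = set CU"
        using IH by (metis mset_eq_setD)+
      then show ?thesis
        unfolding p m_def[symmetric] using IH round(4,5)
        by (intro k_sorted_append_pivot[where h = 1]) simp_all
    qed
    moreover have "real d \<le> budget (length S)"
    proof -
      have "real d = real (d1 + d2) + real d3 + real d4"
        unfolding d by simp
      also have "\<dots> \<le> real (d1 + d2) + budget (length CL) + budget (length CU)"
        using IH by simp
      also have "\<dots> \<le> budget (length S)"
        unfolding round(6) using False round(2,3) pieces(3)
        by (intro budget_recurrence) (simp_all add: Suc_le_eq)
      finally show ?thesis .
    qed
    ultimately show ?thesis by blast
  qed
qed

lemma is_ordering_if_mset_eq: "mset p = mset [0..<n] \<Longrightarrow> is_ordering n p"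
  unfolding is_ordering_def
  by (metis atLeast_upt distinct_upt mset_eq_imp_distinct_iff mset_eq_setD)

lemma budget_eq_powr: "budget n = 4 * real n powr (3/2)"
proof (cases "n = 0")
  case False
  have "real n powr (3/2) = real n powr 1 * real n powr (1/2)"
    using powr_add[of "real n" 1 "1/2"] by simp
  then show ?thesis
    using False unfolding budget_def by (simp add: powr_half_sqrt)
qed (simp add: budget_def)

theorem mainTheorem11:
  shows "\<exists>A :: nat \<Rightarrow> dtree. \<forall>n. queries_in n (A n) \<and>
     (\<forall>(x :: nat \<Rightarrow> real) d p. run x (A n) d p \<longrightarrow>
        real d \<le> 4 * real n powr (3/2) \<and> is_ordering n p \<and> k_sorted 2 x p)"
proof (intro exI allI conjI impI)
  fix n
  show "queries_in n (to_dtree (pivot_sort n [0..<n]))"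
    by (intro queries_in_to_dtree queries_below_pivot_sort) auto
  fix x d p
  assume "run x (to_dtree (pivot_sort n [0..<n])) d p"
  then have "mset p = mset [0..<n] \<and> k_sorted 2 x p \<and> real d \<le> budget n"
    using exec_pivot_sort[OF exec_if_run_to_dtree] by fastforce
  then show "real d \<le> 4 * real n powr (3/2)" "is_ordering n p" "k_sorted 2 x p"
    by (simp_all add: budget_eq_powr is_ordering_if_mset_eq)
qed

end
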